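(* Let $n\ge p$. For $\mathcal X\in\mathrm{St}(n,p,l)$ and $\mathcal U,\mathcal V\in T_{\mathcal X}\mathrm{St}(n,p,l)$ let $\mathcal P=\mathcal I-\frac12\mathcal X*\mathcal X^\top$, $\mathcal W_{\mathcal U}=\mathcal P*\mathcal U*\mathcal X^\top-\mathcal X*\mathcal U^\top*\mathcal P$, and $$\mathcal T_{\mathcal U}\mathcal V=\Big(\mathcal I-\tfrac12\mathcal W_{\mathcal U}\Big)^{-1}*\Big(\mathcal I+\tfrac12\mathcal W_{\mathcal U}\Big)*\mathcal V.$$ Then $\mathcal T$ is an isometric vector transport on $\mathrm{St}(n,p,l)$ associated with the t-Cayley retraction $R_{\mathcal X}(\mathcal U)=(\mathcal I-\frac12\mathcal W_{\mathcal U})^{-1}*(\mathcal I+\frac12\mathcal W_{\mathcal U})*\mathcal X$.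
   Context: Frontal slices $A^{(i)}=\mathcal A(:,:,i)$. The t-product is $\mathcal A*\mathcal B=\operatorname{fold}(\operatorname{bcirc}(\mathcal A)\operatorname{unfold}(\mathcal B))$, where $\operatorname{bcirc}(\mathcal A)$ is the block circulant matrix with $(i,j)$ block $A^{(((i-j)\bmod l)+1)}$, $\operatorname{unfold}$ stacks frontal slices vertically, $\operatorname{fold}$ is its inverse. Transpose: $\mathcal A^\top$ has frontal slices $(A^{(1)})^\top,(A^{(l)})^\top,\dots,(A^{(2)})^\top$. $\mathcal I$ identity tensor; $\mathcal A^{-1}$ t-product inverse. $\mathrm{St}(n,p,l)=\{\mathcal X\in\mathbb R^{n\times p\times l}:\mathcal X^\top*\mathcal X=\mathcal I\}$ with the Riemannian metric $\langle\mathcal A,\mathcal B\rangle_{\mathcal X}=\sum a_{ijk}b_{ijk}$. A vector transport associated with a retraction $R$ is a smooth map $(\eta_x,\xi_x)\mapsto\mathcal T_{\eta_x}\xi_x$ (for tangent vectors at the same point) with $\mathcal T_{\eta_x}\xi_x\in T_{R_x(\eta_x)}M$, $\mathcal T_{0_x}\xi_x=\xi_x$ and linear in $\xi_x$; it is isometric if $\langle\mathcal T_\eta\xi,\mathcal T_\eta\xi\rangle_{R_x(\eta)}=\langle\xi,\xi\rangle_x$ for all $\eta,\xi\in T_xM$. *)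

theory Defs
  imports "HOL-Analysis.Analysis"
begin

text \<open>A tensor is a function of three 0-based indices (row, column, frontal slice).
  A tensor of size n x p x l is one that vanishes outside the index box.\<close>

type_synonym tensor = "nat \<Rightarrow> nat \<Rightarrow> nat \<Rightarrow> real"

definition tdims :: "nat \<Rightarrow> nat \<Rightarrow> nat \<Rightarrow> tensor \<Rightarrow> bool" where
  "tdims n p l A \<longleftrightarrow> (\<forall>i j k. (n \<le> i \<or> p \<le> j \<or> l \<le> k) \<longrightarrow> A i j k = 0)"

definition tadd :: "tensor \<Rightarrow> tensor \<Rightarrow> tensor" where
  "tadd A B = (\<lambda>i j k. A i j k + B i j k)"

definition tsub :: "tensor \<Rightarrow> tensor \<Rightarrow> tensor" where
  "tsub A B = (\<lambda>i j k. A i j k - B i j k)"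

definition tscale :: "real \<Rightarrow> tensor \<Rightarrow> tensor" where
  "tscale c A = (\<lambda>i j k. c * A i j k)"

text \<open>t-product fold(bcirc(A) unfold(B)) with inner dimension m and l frontal slices:
  the k-th frontal slice (0-based) of the product is the sum over s of
  A^((k-s) mod l) B^(s).\<close>

definition tprod :: "nat \<Rightarrow> nat \<Rightarrow> tensor \<Rightarrow> tensor \<Rightarrow> tensor" where
  "tprod m l A B = (\<lambda>i j k. if k < l then
      (\<Sum>r<m. \<Sum>s<l. A i r ((k + l - s) mod l) * B r j s) else 0)"

text \<open>Tensor transpose: frontal slices (A^(1))^T, (A^(l))^T, ..., (A^(2))^T.\<close>

definition ttrans :: "nat \<Rightarrow> tensor \<Rightarrow> tensor" where
  "ttrans l A = (\<lambda>i j k. if k < l then A j i ((l - k) mod l) else 0)"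

definition tid :: "nat \<Rightarrow> nat \<Rightarrow> tensor" where
  "tid n l = (\<lambda>i j k. if i = j \<and> i < n \<and> k = 0 \<and> 0 < l then 1 else 0)"

definition tinvertible :: "nat \<Rightarrow> nat \<Rightarrow> tensor \<Rightarrow> bool" where
  "tinvertible n l A \<longleftrightarrow>
     (\<exists>B. tdims n n l B \<and> tprod n l A B = tid n l \<and> tprod n l B A = tid n l)"

definition tinv :: "nat \<Rightarrow> nat \<Rightarrow> tensor \<Rightarrow> tensor" where
  "tinv n l A = (SOME B. tdims n n l B \<and> tprod n l A B = tid n l \<and> tprod n l B A = tid n l)"

definition tinner :: "nat \<Rightarrow> nat \<Rightarrow> nat \<Rightarrow> tensor \<Rightarrow> tensor \<Rightarrow> real" where
  "tinner n p l A B = (\<Sum>i<n. \<Sum>j<p. \<Sum>k<l. A i j k * B i j k)"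

definition tStiefel :: "nat \<Rightarrow> nat \<Rightarrow> nat \<Rightarrow> tensor set" where
  "tStiefel n p l = {X. tdims n p l X \<and> tprod n l (ttrans l X) X = tid p l}"

text \<open>Tangent space of the embedded submanifold St(n,p,l) at X: velocities at 0 of
  curves in St(n,p,l) through X.\<close>

definition tTangent :: "nat \<Rightarrow> nat \<Rightarrow> nat \<Rightarrow> tensor \<Rightarrow> tensor set" where
  "tTangent n p l X = {U. tdims n p l U \<and>
     (\<exists>\<gamma> :: real \<Rightarrow> tensor. (\<forall>t. \<gamma> t \<in> tStiefel n p l) \<and> \<gamma> 0 = X \<and>
        (\<forall>i j k. ((\<lambda>t. \<gamma> t i j k) has_real_derivative U i j k) (at 0)))}"

definition tP :: "nat \<Rightarrow> nat \<Rightarrow> nat \<Rightarrow> tensor \<Rightarrow> tensor" where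
  "tP n p l X = tsub (tid n l) (tscale (1/2) (tprod p l X (ttrans l X)))"

definition tW :: "nat \<Rightarrow> nat \<Rightarrow> nat \<Rightarrow> tensor \<Rightarrow> tensor \<Rightarrow> tensor" where
  "tW n p l X U = tsub (tprod p l (tprod n l (tP n p l X) U) (ttrans l X))
                       (tprod n l (tprod p l X (ttrans l U)) (tP n p l X))"

definition tCayley :: "nat \<Rightarrow> nat \<Rightarrow> nat \<Rightarrow> tensor \<Rightarrow> tensor \<Rightarrow> tensor" where
  "tCayley n p l X U =
     tprod n l (tprod n l (tinv n l (tsub (tid n l) (tscale (1/2) (tW n p l X U))))
                          (tadd (tid n l) (tscale (1/2) (tW n p l X U)))) X"

definition tTransport :: "nat \<Rightarrow> nat \<Rightarrow> nat \<Rightarrow> tensor \<Rightarrow> tensor \<Rightarrow> tensor \<Rightarrow> tensor" where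
  "tTransport n p l X U V =
     tprod n l (tprod n l (tinv n l (tsub (tid n l) (tscale (1/2) (tW n p l X U))))
                          (tadd (tid n l) (tscale (1/2) (tW n p l X U)))) V"

text \<open>Points are functions z :: 'c \<Rightarrow> real that vanish outside a finite coordinate set C.
  Neighbourhoods and continuity are taken w.r.t. the (sup-)distance on the coordinates in C.\<close>

definition coord_space :: "'c set \<Rightarrow> ('c \<Rightarrow> real) set" where
  "coord_space C = {z. \<forall>c. c \<notin> C \<longrightarrow> z c = 0}"

definition coord_open :: "'c set \<Rightarrow> ('c \<Rightarrow> real) set \<Rightarrow> bool" where
  "coord_open C D \<longleftrightarrow> D \<subseteq> coord_space C \<and>
     (\<forall>z\<in>D. \<exists>e>0. \<forall>w\<in>coord_space C. (\<forall>c\<in>C. \<bar>w c - z c\<bar> < e) \<longrightarrow> w \<in> D)"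

definition coord_cont :: "'c set \<Rightarrow> ('c \<Rightarrow> real) set \<Rightarrow> (('c \<Rightarrow> real) \<Rightarrow> real) \<Rightarrow> bool" where
  "coord_cont C D f \<longleftrightarrow>
     (\<forall>z\<in>D. \<forall>\<epsilon>>0. \<exists>\<delta>>0. \<forall>w\<in>D. (\<forall>c\<in>C. \<bar>w c - z c\<bar> < \<delta>) \<longrightarrow> \<bar>f w - f z\<bar> < \<epsilon>)"

text \<open>C-infinity: continuous, all first partial derivatives exist on D and are again C-infinity
  (greatest fixed point, i.e. partial derivatives of every order exist and are continuous).\<close>

coinductive coord_smooth :: "'c set \<Rightarrow> ('c \<Rightarrow> real) set \<Rightarrow> (('c \<Rightarrow> real) \<Rightarrow> real) \<Rightarrow> bool"
  for C D where
  "coord_cont C D f \<Longrightarrow>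
   (\<forall>c\<in>C. \<exists>g. (\<forall>z\<in>D. ((\<lambda>t. f (z(c := z c + t))) has_real_derivative g z) (at 0))
              \<and> coord_smooth C D g) \<Longrightarrow> coord_smooth C D f"

definition triple_coords :: "nat \<Rightarrow> nat \<Rightarrow> nat \<Rightarrow> (nat \<times> nat \<times> nat \<times> nat) set" where
  "triple_coords n p l = {(t,i,j,k). t < 3 \<and> i < n \<and> j < p \<and> k < l}"

definition pack3 :: "tensor \<Rightarrow> tensor \<Rightarrow> tensor \<Rightarrow> (nat \<times> nat \<times> nat \<times> nat) \<Rightarrow> real" where
  "pack3 X U V = (\<lambda>(t,i,j,k). if t = 0 then X i j k else if t = 1 then U i j k
                               else if t = 2 then V i j k else 0)"

definition unpack :: "nat \<Rightarrow> ((nat \<times> nat \<times> nat \<times> nat) \<Rightarrow> real) \<Rightarrow> tensor" where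
  "unpack t z = (\<lambda>i j k. z (t,i,j,k))"

end

theory Submission
  imports Defs "HOL-Library.Function_Algebras"
begin

text \<open>
  The tensor W = W_U is skew-symmetric for the t-transpose, so B * (W * B) has zero Frobenius
  inner product with B. Hence I - W/2 is injective, and thus invertible, on the finite-dimensional
  space of n x n x l tensors, and the Cayley transform Q = (I - W/2)^-1 * (I + W/2) satisfies
  Q^T * Q = I. Left multiplication by Q maps St(n,p,l) into itself and preserves the Frobenius norm;
  applied to a curve in St(n,p,l) through X with velocity V it gives a curve through R_X(U) with
  velocity T_U V. The transport is linear in V by bilinearity of the t-product, and T_0 = I.

  For smoothness, the entries of T_U V, as functions of the coordinates of (X, U, V), lie in the
  algebra generated by the coordinates and the entries of G = (I - W/2)^-1. This algebra consists
  of continuous functions, because multiplication by G does not increase the Frobenius norm, and it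
  is closed under partial derivatives, because the derivative of G is G (dW/2) G.
\<close>

section \<open>The t-product\<close>

lemma mod_less_double: "x < 2 * l \<Longrightarrow> (x::nat) mod l = (if x < l then x else x - l)"
  by (auto simp: le_mod_geq)

lemma neg_mod_neg_mod: "k < l \<Longrightarrow> (l - (l - k) mod l) mod l = (k::nat)"
  by (cases "k = 0") (auto simp: mod_less_double)

lemma cyclic_diff_eq_0_iff: "k < l \<Longrightarrow> s < l \<Longrightarrow> (k + l - s) mod l = 0 \<longleftrightarrow> s = (k::nat)"
  by (auto simp: mod_less_double)

lemma sum_mod_rotate:
  assumes "s < (l::nat)"
  shows "(\<Sum>r<l. f ((r + s) mod l)) = (\<Sum>r<l. f r)"
  by (rule sum.reindex_bij_witness[where i="\<lambda>r. (r + l - s) mod l" and j="\<lambda>r. (r + s) mod l"])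
     (use assms in \<open>auto simp: mod_less_double\<close>)

(* The index (k + l - s) mod l of the t-product is k - s modulo l, written without truncated
   subtraction. *)
lemma sum_cyclic_convolution_shift:
  fixes f g :: "nat \<Rightarrow> real"
  assumes "k < l" "s < l"
  shows "(\<Sum>r<l. f (((k + l - s) mod l + l - r) mod l) * g r) =
         (\<Sum>r<l. f ((k + l - r) mod l) * g ((r + l - s) mod l))"
proof -
  have "(\<Sum>r<l. f ((k + l - r) mod l) * g ((r + l - s) mod l)) =
        (\<Sum>r<l. f ((k + l - (r + s) mod l) mod l) * g (((r + s) mod l + l - s) mod l))"
    using sum_mod_rotate[OF assms(2), of "\<lambda>r. f ((k + l - r) mod l) * g ((r + l - s) mod l)"]
    by simp
  also have "\<dots> = (\<Sum>r<l. f (((k + l - s) mod l + l - r) mod l) * g r)"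
    using assms by (intro sum.cong refl) (simp add: mod_less_double ac_simps; arith)
  finally show ?thesis by simp
qed

lemma sum_swap_outer_pair:
  "(\<Sum>a\<in>A. \<Sum>b\<in>B. \<Sum>c\<in>C. \<Sum>d\<in>D. f a b c d) = (\<Sum>c\<in>C. \<Sum>d\<in>D. \<Sum>a\<in>A. \<Sum>b\<in>B. f a b c d)"
proof -
  have "(\<Sum>a\<in>A. \<Sum>b\<in>B. \<Sum>c\<in>C. \<Sum>d\<in>D. f a b c d) = (\<Sum>a\<in>A. \<Sum>c\<in>C. \<Sum>b\<in>B. \<Sum>d\<in>D. f a b c d)"
    by (rule sum.cong[OF refl], rule sum.swap)
  also have "\<dots> = (\<Sum>c\<in>C. \<Sum>a\<in>A. \<Sum>b\<in>B. \<Sum>d\<in>D. f a b c d)"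
    by (rule sum.swap)
  also have "\<dots> = (\<Sum>c\<in>C. \<Sum>a\<in>A. \<Sum>d\<in>D. \<Sum>b\<in>B. f a b c d)"
    by (intro sum.cong refl, rule sum.swap)
  also have "\<dots> = (\<Sum>c\<in>C. \<Sum>d\<in>D. \<Sum>a\<in>A. \<Sum>b\<in>B. f a b c d)"
    by (rule sum.cong[OF refl], rule sum.swap)
  finally show ?thesis .
qed

lemma sum_kronecker:
  "(\<Sum>r<(n::nat). \<Sum>s<(l::nat). if r = i \<and> s = k then F r s else 0) =
   (if i < n \<and> k < l then F i k else (0::real))"
proof -
  have "(\<Sum>r<n. \<Sum>s<l. if r = i \<and> s = k then F r s else 0) =
        (\<Sum>r<n. if r = i then (\<Sum>s<l. if s = k then F r s else 0) else 0)"
    by (intro sum.cong refl) auto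
  then show ?thesis by simp
qed

lemma tdimsD: "tdims n p l A \<Longrightarrow> n \<le> i \<or> p \<le> j \<or> l \<le> k \<Longrightarrow> A i j k = 0"
  unfolding tdims_def by blast

lemma tdims_tprod: "tdims n m' l A \<Longrightarrow> tdims m'' q l B \<Longrightarrow> tdims n q l (tprod m l A B)"
  unfolding tdims_def tprod_def by auto

lemma tdims_ttrans: "tdims n p l A \<Longrightarrow> tdims p n l (ttrans l A)"
  unfolding tdims_def ttrans_def by auto

lemma tdims_tid: "tdims n n l (tid n l)"
  unfolding tdims_def tid_def by auto

lemma tdims_tadd: "tdims n p l A \<Longrightarrow> tdims n p l B \<Longrightarrow> tdims n p l (tadd A B)"
  unfolding tdims_def tadd_def by auto

lemma tdims_tsub: "tdims n p l A \<Longrightarrow> tdims n p l B \<Longrightarrow> tdims n p l (tsub A B)"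
  unfolding tdims_def tsub_def by auto

lemma tdims_tscale: "tdims n p l A \<Longrightarrow> tdims n p l (tscale c A)"
  unfolding tdims_def tscale_def by auto

lemma tdims_zero: "tdims n p l (\<lambda>i j k. 0)"
  unfolding tdims_def by auto

lemma tprod_assoc: "tprod m l (tprod q l A B) C = tprod q l A (tprod m l B C)"
proof (intro ext)
  fix i j k
  show "tprod m l (tprod q l A B) C i j k = tprod q l A (tprod m l B C) i j k"
  proof (cases "k < l")
    case False
    then show ?thesis by (simp add: tprod_def)
  next
    case True
    have "tprod q l A (tprod m l B C) i j k =
      (\<Sum>r'<q. \<Sum>s'<l. \<Sum>r<m. \<Sum>s<l. A i r' ((k + l - s') mod l) * B r' r ((s' + l - s) mod l) * C r j s)"
      using True by (simp add: tprod_def sum_distrib_left mult.assoc)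
    also have "\<dots> =
      (\<Sum>r<m. \<Sum>s<l. \<Sum>r'<q. \<Sum>s'<l. A i r' ((k + l - s') mod l) * B r' r ((s' + l - s) mod l) * C r j s)"
      by (rule sum_swap_outer_pair)
    also have "\<dots> =
      (\<Sum>r<m. \<Sum>s<l. \<Sum>r'<q. \<Sum>s'<l. A i r' (((k + l - s) mod l + l - s') mod l) * B r' r s' * C r j s)"
    proof -
      have eq: "(\<Sum>s'<l. A i r' ((k + l - s') mod l) * B r' r ((s' + l - s) mod l) * C r j s) =
            (\<Sum>s'<l. A i r' (((k + l - s) mod l + l - s') mod l) * B r' r s' * C r j s)"
        if "s < l" for r s r'
        using sum_cyclic_convolution_shift[OF True that, of "A i r'" "B r' r"]
        by (simp add: sum_distrib_right[symmetric])
      show ?thesis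
        by (rule sum.cong[OF refl], rule sum.cong[OF refl], rule sum.cong[OF refl]) (simp add: eq)
    qed
    also have "\<dots> = tprod m l (tprod q l A B) C i j k"
      using True by (simp add: tprod_def sum_distrib_right)
    finally show ?thesis by simp
  qed
qed

lemma ttrans_tprod: "ttrans l (tprod m l A B) = tprod m l (ttrans l B) (ttrans l A)"
proof (intro ext)
  fix i j k
  show "ttrans l (tprod m l A B) i j k = tprod m l (ttrans l B) (ttrans l A) i j k"
  proof (cases "k < l")
    case False
    then show ?thesis by (simp add: tprod_def ttrans_def)
  next
    case True
    have "(\<Sum>s<l. B r i ((l - (k + l - s) mod l) mod l) * A j r ((l - s) mod l)) =
          (\<Sum>s<l. A j r (((l - k) mod l + l - s) mod l) * B r i s)" for r
    proof -
      have "(\<Sum>s<l. B r i ((l - (k + l - s) mod l) mod l) * A j r ((l - s) mod l)) =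
            (\<Sum>s<l. B r i ((l - (k + l - (s + k) mod l) mod l) mod l) * A j r ((l - (s + k) mod l) mod l))"
        using sum_mod_rotate[OF True, of "\<lambda>s. B r i ((l - (k + l - s) mod l) mod l) * A j r ((l - s) mod l)"]
        by simp
      also have "\<dots> = (\<Sum>s<l. A j r (((l - k) mod l + l - s) mod l) * B r i s)"
      proof (intro sum.cong refl)
        fix s assume "s \<in> {..<l}"
        then have "(l - (k + l - (s + k) mod l) mod l) mod l = s"
          and "(l - (s + k) mod l) mod l = ((l - k) mod l + l - s) mod l"
          using True by (simp_all add: mod_less_double; arith)+
        then show "B r i ((l - (k + l - (s + k) mod l) mod l) mod l) * A j r ((l - (s + k) mod l) mod l) =
                   A j r (((l - k) mod l + l - s) mod l) * B r i s"
          by simp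
      qed
      finally show ?thesis .
    qed
    with True show ?thesis by (simp add: tprod_def ttrans_def)
  qed
qed

lemma ttrans_ttrans: "tdims n p l A \<Longrightarrow> ttrans l (ttrans l A) = A"
  by (intro ext) (auto simp: tdims_def ttrans_def neg_mod_neg_mod)

lemma ttrans_tid: "ttrans l (tid n l) = tid n l"
  by (intro ext) (auto simp: tid_def ttrans_def mod_less_double)

lemma tprod_tid_left:
  assumes "tdims n q l A"
  shows "tprod n l (tid n l) A = A"
proof (intro ext)
  fix i j k
  show "tprod n l (tid n l) A i j k = A i j k"
  proof (cases "k < l \<and> i < n")
    case True
    then have "tprod n l (tid n l) A i j k = (\<Sum>r<n. \<Sum>s<l. if r = i \<and> s = k then A r j s else 0)"
      unfolding tprod_def tid_def by (simp, intro sum.cong refl) (auto simp: cyclic_diff_eq_0_iff)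
    with True show ?thesis by (simp add: sum_kronecker)
  next
    case False
    with assms show ?thesis by (auto simp: tdims_def tprod_def tid_def)
  qed
qed

lemma tprod_tid_right:
  assumes "tdims m p l A"
  shows "tprod p l A (tid p l) = A"
proof (intro ext)
  fix i j k
  show "tprod p l A (tid p l) i j k = A i j k"
  proof (cases "k < l \<and> j < p")
    case True
    then have "tprod p l A (tid p l) i j k = (\<Sum>r<p. \<Sum>s<l. if r = j \<and> s = 0 then A i r k else 0)"
      unfolding tprod_def tid_def by (simp, intro sum.cong refl) auto
    with True show ?thesis by (simp add: sum_kronecker)
  next
    case False
    with assms show ?thesis by (auto simp: tdims_def tprod_def tid_def)
  qed
qed

lemma tprod_tadd_left: "tprod m l (tadd A B) C = tadd (tprod m l A C) (tprod m l B C)"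
  unfolding tprod_def tadd_def by (intro ext) (simp add: distrib_right sum.distrib)

lemma tprod_tadd_right: "tprod m l C (tadd A B) = tadd (tprod m l C A) (tprod m l C B)"
  unfolding tprod_def tadd_def by (intro ext) (simp add: distrib_left sum.distrib)

lemma tprod_tsub_left: "tprod m l (tsub A B) C = tsub (tprod m l A C) (tprod m l B C)"
  unfolding tprod_def tsub_def by (intro ext) (simp add: left_diff_distrib sum_subtractf)

lemma tprod_tsub_right: "tprod m l C (tsub A B) = tsub (tprod m l C A) (tprod m l C B)"
  unfolding tprod_def tsub_def by (intro ext) (simp add: right_diff_distrib sum_subtractf)

lemma tprod_tscale_left: "tprod m l (tscale c A) C = tscale c (tprod m l A C)"
  unfolding tprod_def tscale_def by (intro ext) (simp add: mult.assoc sum_distrib_left)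

lemma tprod_tscale_right: "tprod m l C (tscale c A) = tscale c (tprod m l C A)"
  unfolding tprod_def tscale_def by (intro ext) (simp add: mult.left_commute sum_distrib_left)

lemma tprod_zero_left: "tprod m l (\<lambda>i j k. 0) C = (\<lambda>i j k. 0)"
  unfolding tprod_def by (intro ext) simp

lemma tprod_zero_right: "tprod m l C (\<lambda>i j k. 0) = (\<lambda>i j k. 0)"
  unfolding tprod_def by (intro ext) simp

lemma ttrans_tadd: "ttrans l (tadd A B) = tadd (ttrans l A) (ttrans l B)"
  unfolding ttrans_def tadd_def by (intro ext) simp

lemma ttrans_tsub: "ttrans l (tsub A B) = tsub (ttrans l A) (ttrans l B)"
  unfolding ttrans_def tsub_def by (intro ext) simp

lemma ttrans_tscale: "ttrans l (tscale c A) = tscale c (ttrans l A)"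
  unfolding ttrans_def tscale_def by (intro ext) simp

lemma tprod_inverse_commute:
  assumes A: "tdims n n l A" and G: "tdims n n l G"
    and comm: "tprod n l B A = tprod n l A B"
    and inv: "tprod n l G B = tid n l" "tprod n l B G = tid n l"
  shows "tprod n l G A = tprod n l A G"
proof -
  have "tprod n l G A = tprod n l G (tprod n l (tprod n l A B) G)"
    using inv(2) A by (simp add: tprod_assoc tprod_tid_right)
  also have "\<dots> = tprod n l (tprod n l G B) (tprod n l A G)"
    by (simp only: comm[symmetric] tprod_assoc)
  also have "\<dots> = tprod n l A G"
    using inv(1) tprod_tid_left[OF tdims_tprod[OF A G]] by simp
  finally show ?thesis .
qed

lemma tprod_inverse_diff:
  assumes "tdims n n l G" "tdims n n l G'"
    and "tprod n l G A = tid n l" "tprod n l A' G' = tid n l"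
  shows "tsub G G' = tprod n l (tprod n l G (tsub A' A)) G'"
proof -
  have "tprod n l (tprod n l G (tsub A' A)) G' =
        tsub (tprod n l G (tprod n l A' G')) (tprod n l (tprod n l G A) G')"
    by (simp only: tprod_tsub_right tprod_tsub_left tprod_assoc)
  then show ?thesis
    using assms by (simp add: tprod_tid_left tprod_tid_right)
qed

section \<open>The Frobenius inner product\<close>

definition ttrace :: "nat \<Rightarrow> tensor \<Rightarrow> real" where
  "ttrace p C = (\<Sum>j<p. C j j 0)"

lemma tinner_eq_ttrace:
  assumes "0 < l"
  shows "tinner n p l A B = ttrace p (tprod n l (ttrans l A) B)"
proof -
  have "ttrace p (tprod n l (ttrans l A) B) = (\<Sum>j<p. \<Sum>r<n. \<Sum>s<l. A r j s * B r j s)"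
    unfolding ttrace_def tprod_def ttrans_def
    using assms by (auto intro!: sum.cong simp: neg_mod_neg_mod)
  also have "\<dots> = tinner n p l A B"
    unfolding tinner_def by (rule sum.swap)
  finally show ?thesis by simp
qed

lemma ttrace_ttrans: "0 < l \<Longrightarrow> ttrace p (ttrans l C) = ttrace p C"
  unfolding ttrace_def ttrans_def by simp

lemma ttrace_tscale: "ttrace p (tscale c C) = c * ttrace p C"
  unfolding ttrace_def tscale_def by (simp add: sum_distrib_left)

lemma tinner_tsub_left: "tinner n p l (tsub X Y) B = tinner n p l X B - tinner n p l Y B"
  unfolding tinner_def tsub_def by (simp add: left_diff_distrib sum_subtractf)

lemma tinner_tsub_right: "tinner n p l B (tsub X Y) = tinner n p l B X - tinner n p l B Y"
  unfolding tinner_def tsub_def by (simp add: right_diff_distrib sum_subtractf)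

lemma tinner_tscale_right: "tinner n p l B (tscale c X) = c * tinner n p l B X"
  unfolding tinner_def tscale_def by (simp add: sum_distrib_left mult.left_commute)

lemma tinner_commute: "tinner n p l A B = tinner n p l B A"
  unfolding tinner_def by (simp add: mult.commute)

lemma tinner_self_nonneg: "0 \<le> tinner n p l A A"
  unfolding tinner_def by (intro sum_nonneg) auto

lemma tinner_self_eq_0:
  assumes "tdims n p l A" "tinner n p l A A = 0"
  shows "A = (\<lambda>i j k. 0)"
proof (intro ext)
  fix i j k
  have "\<forall>i\<in>{..<n}. \<forall>j\<in>{..<p}. \<forall>k\<in>{..<l}. A i j k * A i j k = 0"
    using assms(2) unfolding tinner_def
    by (simp add: sum_nonneg_eq_0_iff sum_nonneg)
  then show "A i j k = 0"
    using tdimsD[OF assms(1), of i j k] by (cases "i < n \<and> j < p \<and> k < l") auto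
qed

lemma entry_square_le_tinner:
  assumes "a < n" "b < p" "k < l"
  shows "(A a b k)\<^sup>2 \<le> tinner n p l A A"
proof -
  have "(A a b k)\<^sup>2 \<le> (\<Sum>k<l. A a b k * A a b k)"
    unfolding power2_eq_square using assms
    by (intro member_le_sum[where f="\<lambda>k. A a b k * A a b k"]) auto
  also have "\<dots> \<le> (\<Sum>j<p. \<Sum>k<l. A a j k * A a j k)"
    using assms by (intro member_le_sum[where f="\<lambda>j. \<Sum>k<l. A a j k * A a j k"]) (auto intro: sum_nonneg)
  also have "\<dots> \<le> tinner n p l A A"
    unfolding tinner_def using assms
    by (intro member_le_sum[where f="\<lambda>i. \<Sum>j<p. \<Sum>k<l. A i j k * A i j k"]) (auto intro!: sum_nonneg)
  finally show ?thesis .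
qed

section \<open>Skew-symmetric tensors\<close>

definition tskew :: "nat \<Rightarrow> nat \<Rightarrow> tensor \<Rightarrow> bool" where
  "tskew n l W \<longleftrightarrow> tdims n n l W \<and> ttrans l W = tscale (-1) W"

lemma tinner_tprod_tskew:
  assumes W: "tskew n l W" and B: "tdims n q l B"
  shows "tinner n q l B (tprod n l W B) = 0"
proof (cases "l = 0")
  case True
  then show ?thesis by (simp add: tinner_def)
next
  case False
  let ?M = "tprod n l (ttrans l B) (tprod n l W B)"
  have "ttrans l ?M = tprod n l (tprod n l (ttrans l B) (ttrans l W)) B"
    using B by (simp add: ttrans_tprod ttrans_ttrans tprod_assoc)
  also have "\<dots> = tscale (-1) ?M"
    using W by (simp add: tskew_def tprod_tscale_left tprod_tscale_right tprod_assoc)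
  finally have "ttrace q ?M = - ttrace q ?M"
    using False ttrace_ttrans[of l q ?M] ttrace_tscale[of q "-1" ?M] by simp
  then show ?thesis
    using False by (simp add: tinner_eq_ttrace)
qed

lemma tinner_tprod_cayley_factor:
  assumes W: "tskew n l W" and B: "tdims n q l B"
  shows "tinner n q l B (tprod n l (tsub (tid n l) (tscale c W)) B) = tinner n q l B B"
proof -
  have "tprod n l (tsub (tid n l) (tscale c W)) B = tsub B (tscale c (tprod n l W B))"
    using B by (simp add: tprod_tsub_left tprod_tscale_left tprod_tid_left)
  then show ?thesis
    using tinner_tprod_tskew[OF W B] by (simp add: tinner_tsub_right tinner_tscale_right)
qed

lemma tskew_neg: "tskew n l W \<Longrightarrow> tskew n l (tscale (-1) W)"
  unfolding tskew_def by (simp add: ttrans_tscale tdims_tscale)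

lemma ttrans_cayley_factors:
  assumes "tskew n l W"
  shows "ttrans l (tsub (tid n l) (tscale c W)) = tadd (tid n l) (tscale c W)"
    and "ttrans l (tadd (tid n l) (tscale c W)) = tsub (tid n l) (tscale c W)"
  using assms
  by (simp_all add: tskew_def ttrans_tsub ttrans_tadd ttrans_tid ttrans_tscale)
     (simp_all add: tadd_def tsub_def tscale_def)

section \<open>Invertibility of the Cayley denominator\<close>

context vector_space
begin

lemma linear_inj_on_imp_surj_on:
  assumes f: "Vector_Spaces.linear scale scale f"
    and V: "subspace V" "finite E" "V \<subseteq> span E"
    and fV: "f ` V \<subseteq> V" and inj: "inj_on f V"
  shows "f ` V = V"
proof
  interpret f: Vector_Spaces.linear scale scale f by (rule f)
  obtain B where B: "B \<subseteq> V" "independent B" "V \<subseteq> span B"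
    using basis_exists[of V] by metis
  have "B \<subseteq> span E"
    using B(1) V(3) by blast
  then have "finite B"
    using independent_span_bound[OF V(2) B(2)] by blast
  have span_B: "span B = V"
    using B(3) span_minimal[OF B(1) V(1)] by blast
  have "independent (f ` B)"
    using f.independent_injective_image[OF B(2)] inj unfolding span_B by blast
  have card_fB: "card (f ` B) = card B"
    using card_image[OF inj_on_subset[OF inj B(1)]] .
  show "V \<subseteq> f ` V"
  proof
    fix y assume "y \<in> V"
    have "y \<in> span (f ` B)"
    proof (rule ccontr)
      assume y: "y \<notin> span (f ` B)"
      then have "independent (insert y (f ` B))"
        using independent_insertI \<open>independent (f ` B)\<close> by blast
      moreover have "insert y (f ` B) \<subseteq> span B"
        using \<open>y \<in> V\<close> B(1) fV span_B by auto
      ultimately have "card (insert y (f ` B)) \<le> card B"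
        using independent_span_bound[OF \<open>finite B\<close>] by blast
      moreover have "y \<notin> f ` B"
        using y span_base by blast
      ultimately show False
        using card_fB \<open>finite B\<close> by simp
    qed
    then show "y \<in> f ` V"
      unfolding f.span_image span_B .
  qed
qed (use fV in blast)

end

interpretation tensor: vector_space tscale
  by unfold_locales (auto simp: tscale_def fun_eq_iff algebra_simps)

lemma tadd_eq_plus: "tadd A B = A + B"
  by (simp add: tadd_def fun_eq_iff)

lemma zero_tensor_eq_0: "(\<lambda>i j k. 0::real) = 0"
  by (simp add: fun_eq_iff)

lemma tdims_subspace: "tensor.subspace {A. tdims n m l A}"
  unfolding tensor.subspace_def
  using tdims_tadd[of n m l] tdims_tscale[of n m l] tdims_zero[of n m l]
  by (auto simp: tadd_eq_plus zero_tensor_eq_0)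

definition tunit :: "nat \<times> nat \<times> nat \<Rightarrow> tensor" where
  "tunit x = (\<lambda>i j k. if (i, j, k) = x then 1 else 0)"

lemma sum_apply_tensor: "(\<Sum>a\<in>S. f a) i j k = (\<Sum>a\<in>S. f a i j k)" for f :: "'a \<Rightarrow> tensor"
  by (induction S rule: infinite_finite_induct) auto

lemma tdims_subset_span_tunit:
  "{A. tdims n m l A} \<subseteq> tensor.span (tunit ` ({..<n} \<times> {..<m} \<times> {..<l}))"
proof
  fix A assume "A \<in> {A. tdims n m l A}"
  then have A: "tdims n m l A" by simp
  let ?box = "{..<n} \<times> {..<m} \<times> {..<l}"
  let ?S = "\<Sum>x\<in>?box. tscale (A (fst x) (fst (snd x)) (snd (snd x))) (tunit x)"
  have "?S = A"
  proof (intro ext)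
    fix i j k
    have "?S i j k = (\<Sum>x\<in>?box. if x = (i, j, k) then A i j k else 0)"
      unfolding sum_apply_tensor tscale_def tunit_def by (intro sum.cong refl) auto
    also have "\<dots> = A i j k"
      using tdimsD[OF A, of i j k] by (auto simp: not_less)
    finally show "?S i j k = A i j k" .
  qed
  moreover have "?S \<in> tensor.span (tunit ` ?box)"
    by (intro tensor.span_sum tensor.span_scale tensor.span_base) auto
  ultimately show "A \<in> tensor.span (tunit ` ?box)" by simp
qed

lemma linear_tprod: "Vector_Spaces.linear tscale tscale (tprod m l A)"
  unfolding Vector_Spaces.linear_iff
  by (simp add: tensor.vector_space_axioms tprod_tadd_right[unfolded tadd_eq_plus] tprod_tscale_right)

lemma tskew_cayley_right_inverse:
  assumes W: "tskew n l W"
  obtains B where "tdims n n l B" "tprod n l (tsub (tid n l) (tscale (1/2) W)) B = tid n l"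
proof -
  let ?A = "tsub (tid n l) (tscale (1/2) W)"
  let ?V = "{B. tdims n n l B}"
  interpret A: Vector_Spaces.linear tscale tscale "tprod n l ?A"
    by (rule linear_tprod)
  have A: "tdims n n l ?A"
    using W by (simp add: tskew_def tdims_tsub tdims_tscale tdims_tid)
  have "inj_on (tprod n l ?A) ?V"
    unfolding A.inj_on_iff_eq_0[OF tdims_subspace]
  proof (intro ballI impI)
    fix B assume B: "B \<in> ?V" and AB: "tprod n l ?A B = 0"
    then have "tinner n n l B B = 0"
      using tinner_tprod_cayley_factor[OF W, of n B "1/2"] by (simp add: tinner_def)
    with B show "B = 0"
      using tinner_self_eq_0[of n n l B] zero_tensor_eq_0 by simp
  qed
  moreover have "tprod n l ?A ` ?V \<subseteq> ?V"
    using tdims_tprod[OF A] by auto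
  ultimately have "tprod n l ?A ` ?V = ?V"
    using tensor.linear_inj_on_imp_surj_on[OF linear_tprod tdims_subspace _ tdims_subset_span_tunit]
    by simp
  then have "tid n l \<in> tprod n l ?A ` ?V"
    using tdims_tid by simp
  then show ?thesis
    using that by auto
qed

(* A left inverse is the transpose of a right inverse of (I - W/2)^T = I - (-W)/2. *)
lemma tinvertible_cayley_factor:
  assumes W: "tskew n l W"
  shows "tinvertible n l (tsub (tid n l) (tscale (1/2) W))"
proof -
  let ?A = "tsub (tid n l) (tscale (1/2) W)"
  obtain B where B: "tdims n n l B" "tprod n l ?A B = tid n l"
    using tskew_cayley_right_inverse[OF W] by blast
  obtain C where C: "tdims n n l C" "tprod n l (tsub (tid n l) (tscale (1/2) (tscale (-1) W))) C = tid n l"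
    using tskew_cayley_right_inverse[OF tskew_neg[OF W]] by blast
  have "tsub (tid n l) (tscale (1/2) (tscale (-1) W)) = ttrans l ?A"
    unfolding ttrans_cayley_factors(1)[OF W] by (simp add: tsub_def tadd_def tscale_def)
  with C(2) have "ttrans l (tprod n l (ttrans l ?A) C) = tid n l"
    by (simp add: ttrans_tid)
  moreover have "tdims n n l ?A"
    using W by (simp add: tskew_def tdims_tsub tdims_tscale tdims_tid)
  ultimately have CA: "tprod n l (ttrans l C) ?A = tid n l"
    by (simp add: ttrans_tprod ttrans_ttrans)
  have "ttrans l C = tprod n l (tprod n l (ttrans l C) ?A) B"
    using B(2) tprod_tid_right[OF tdims_ttrans[OF C(1)]] by (simp add: tprod_assoc)
  then have "tprod n l B ?A = tid n l"
    using CA tprod_tid_left[OF B(1)] by simp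
  with B show ?thesis
    unfolding tinvertible_def by blast
qed

lemma tinvertible_tinv:
  assumes "tinvertible n l A"
  shows "tdims n n l (tinv n l A)" "tprod n l A (tinv n l A) = tid n l" "tprod n l (tinv n l A) A = tid n l"
  using someI_ex[OF assms[unfolded tinvertible_def]] unfolding tinv_def by auto

lemma tinv_tid: "tinv n l (tid n l) = tid n l"
proof -
  have "tinvertible n l (tid n l)"
    unfolding tinvertible_def using tdims_tid tprod_tid_left[OF tdims_tid] by blast
  then show ?thesis
    using tinvertible_tinv tprod_tid_left by metis
qed

definition cayley_den_inv :: "nat \<Rightarrow> nat \<Rightarrow> tensor \<Rightarrow> tensor" where
  "cayley_den_inv n l W = tinv n l (tsub (tid n l) (tscale (1/2) W))"

lemma cayley_den_inv:
  assumes "tskew n l W"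
  shows "tdims n n l (cayley_den_inv n l W)"
    and "tprod n l (tsub (tid n l) (tscale (1/2) W)) (cayley_den_inv n l W) = tid n l"
    and "tprod n l (cayley_den_inv n l W) (tsub (tid n l) (tscale (1/2) W)) = tid n l"
  unfolding cayley_den_inv_def
  using tinvertible_tinv[OF tinvertible_cayley_factor[OF assms]] by auto

section \<open>Orthogonality of the Cayley transform\<close>

definition tcayley :: "nat \<Rightarrow> nat \<Rightarrow> tensor \<Rightarrow> tensor" where
  "tcayley n l W = tprod n l (cayley_den_inv n l W) (tadd (tid n l) (tscale (1/2) W))"

lemma tdims_tcayley: "tskew n l W \<Longrightarrow> tdims n n l (tcayley n l W)"
  unfolding tcayley_def using cayley_den_inv(1)
  by (intro tdims_tprod[of n n l _ n] tdims_tadd tdims_tid tdims_tscale) (auto simp: tskew_def)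

definition torth :: "nat \<Rightarrow> nat \<Rightarrow> tensor \<Rightarrow> bool" where
  "torth n l Q \<longleftrightarrow> tdims n n l Q \<and> tprod n l (ttrans l Q) Q = tid n l"

lemma cayley_factors_commute:
  assumes "tdims n n l H"
  shows "tprod n l (tadd (tid n l) H) (tsub (tid n l) H) = tprod n l (tsub (tid n l) H) (tadd (tid n l) H)"
  using assms
  by (simp add: tprod_tadd_left tprod_tadd_right tprod_tsub_left tprod_tsub_right tprod_tid_left
      tprod_tid_right tdims_tid) (simp add: tadd_def tsub_def fun_eq_iff)

(* With G = (I - W/2)^-1, the transpose G^T inverts I + W/2, and so commutes with I - W/2. *)
lemma torth_tcayley:
  assumes W: "tskew n l W"
  shows "torth n l (tcayley n l W)"
proof -
  let ?H = "tscale (1/2) W"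
  let ?A = "tsub (tid n l) ?H" and ?B = "tadd (tid n l) ?H"
  let ?G = "cayley_den_inv n l W"
  have H: "tdims n n l ?H"
    using W by (simp add: tskew_def tdims_tscale)
  have A: "tdims n n l ?A" and B: "tdims n n l ?B"
    using H by (simp_all add: tdims_tsub tdims_tadd tdims_tid)
  note G = cayley_den_inv[OF W]
  have GT: "tdims n n l (ttrans l ?G)"
    using tdims_ttrans[OF G(1)] .
  have GT_B: "tprod n l (ttrans l ?G) ?B = tid n l" and B_GT: "tprod n l ?B (ttrans l ?G) = tid n l"
    using arg_cong[OF G(2), of "ttrans l"] arg_cong[OF G(3), of "ttrans l"] W
    by (simp_all add: ttrans_tprod ttrans_cayley_factors ttrans_tid)
  have GT_A: "tprod n l (ttrans l ?G) ?A = tprod n l ?A (ttrans l ?G)"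
    using tprod_inverse_commute[OF A GT cayley_factors_commute[OF H] GT_B B_GT] .
  have "tprod n l (ttrans l (tcayley n l W)) (tcayley n l W) =
        tprod n l (tprod n l (ttrans l ?G) ?A) (tprod n l ?G ?B)"
    unfolding tcayley_def using W GT_A by (simp add: ttrans_tprod ttrans_cayley_factors)
  also have "\<dots> = tprod n l (ttrans l ?G) (tprod n l (tprod n l ?A ?G) ?B)"
    by (simp add: tprod_assoc)
  also have "\<dots> = tid n l"
    using G(2) tprod_tid_left[OF B] GT_B by simp
  finally show ?thesis
    unfolding torth_def using tdims_tcayley[OF W] by blast
qed

lemma tStiefel_tprod_torth:
  assumes Q: "torth n l Q" and X: "X \<in> tStiefel n p l"
  shows "tprod n l Q X \<in> tStiefel n p l"
proof -
  have Xd: "tdims n p l X" and XX: "tprod n l (ttrans l X) X = tid p l"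
    using X unfolding tStiefel_def by auto
  have "tprod n l (ttrans l (tprod n l Q X)) (tprod n l Q X) =
        tprod n l (ttrans l X) (tprod n l (tprod n l (ttrans l Q) Q) X)"
    by (simp add: ttrans_tprod tprod_assoc)
  also have "\<dots> = tid p l"
    using Q XX tprod_tid_left[OF Xd] by (simp add: torth_def)
  finally show ?thesis
    unfolding tStiefel_def using Q Xd by (auto simp: torth_def intro: tdims_tprod)
qed

lemma has_real_derivative_tprod_left:
  assumes "\<And>i j k. ((\<lambda>t. \<gamma> t i j k) has_real_derivative V i j k) (at 0)"
  shows "((\<lambda>t. tprod m l Q (\<gamma> t) i j k) has_real_derivative tprod m l Q V i j k) (at 0)"
  unfolding tprod_def by (cases "k < l") (simp_all, intro DERIV_sum DERIV_cmult assms)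

lemma tTangent_tprod_torth:
  assumes Q: "torth n l Q" and V: "V \<in> tTangent n p l X"
  shows "tprod n l Q V \<in> tTangent n p l (tprod n l Q X)"
proof -
  obtain \<gamma> where \<gamma>: "\<forall>t. \<gamma> t \<in> tStiefel n p l" "\<gamma> 0 = X"
    "\<forall>i j k. ((\<lambda>t. \<gamma> t i j k) has_real_derivative V i j k) (at 0)" and Vd: "tdims n p l V"
    using V unfolding tTangent_def by blast
  have "\<forall>t. tprod n l Q (\<gamma> t) \<in> tStiefel n p l"
    using tStiefel_tprod_torth[OF Q] \<gamma>(1) by blast
  moreover have "\<forall>i j k. ((\<lambda>t. tprod n l Q (\<gamma> t) i j k) has_real_derivative tprod n l Q V i j k) (at 0)"
    using has_real_derivative_tprod_left \<gamma>(3) by blast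
  moreover have "tdims n p l (tprod n l Q V)"
    using Q Vd by (auto simp: torth_def intro: tdims_tprod)
  ultimately show ?thesis
    unfolding tTangent_def using \<gamma>(2) by auto
qed

lemma tinner_tprod_torth:
  assumes Q: "torth n l Q" and V: "tdims n p l V"
  shows "tinner n p l (tprod n l Q V) (tprod n l Q V) = tinner n p l V V"
proof (cases "l = 0")
  case True
  then show ?thesis by (simp add: tinner_def)
next
  case False
  have "tprod n l (ttrans l (tprod n l Q V)) (tprod n l Q V) =
        tprod n l (ttrans l V) (tprod n l (tprod n l (ttrans l Q) Q) V)"
    by (simp add: ttrans_tprod tprod_assoc)
  also have "\<dots> = tprod n l (ttrans l V) V"
    using Q tprod_tid_left[OF V] by (simp add: torth_def)
  finally show ?thesis
    using False by (simp add: tinner_eq_ttrace)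
qed

section \<open>The t-Cayley transport\<close>

lemma ttrans_tP: "tdims n p l X \<Longrightarrow> ttrans l (tP n p l X) = tP n p l X"
  unfolding tP_def by (simp add: ttrans_tsub ttrans_tid ttrans_tscale ttrans_tprod ttrans_ttrans)

lemma tdims_tP: "tdims n p l X \<Longrightarrow> tdims n n l (tP n p l X)"
  unfolding tP_def by (intro tdims_tsub tdims_tid tdims_tscale tdims_tprod tdims_ttrans) auto

lemma tskew_tW:
  assumes X: "tdims n p l X" and U: "tdims n p l U"
  shows "tskew n l (tW n p l X U)"
proof -
  let ?P = "tP n p l X"
  have "tdims n n l (tW n p l X U)"
    unfolding tW_def using tdims_tP[OF X] X U
    by (intro tdims_tsub tdims_tprod tdims_ttrans) auto
  moreover have "ttrans l (tprod p l (tprod n l ?P U) (ttrans l X)) = tprod n l (tprod p l X (ttrans l U)) ?P"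
    and "ttrans l (tprod n l (tprod p l X (ttrans l U)) ?P) = tprod p l (tprod n l ?P U) (ttrans l X)"
    using X U ttrans_tP[OF X] by (simp_all add: ttrans_tprod ttrans_ttrans tprod_assoc)
  then have "ttrans l (tW n p l X U) = tscale (-1) (tW n p l X U)"
    unfolding tW_def ttrans_tsub by (simp add: tsub_def tscale_def fun_eq_iff)
  ultimately show ?thesis
    unfolding tskew_def by blast
qed

lemma tTransport_eq_tcayley: "tTransport n p l X U V = tprod n l (tcayley n l (tW n p l X U)) V"
  unfolding tTransport_def tcayley_def cayley_den_inv_def ..

lemma tCayley_eq_tcayley: "tCayley n p l X U = tprod n l (tcayley n l (tW n p l X U)) X"
  unfolding tCayley_def tcayley_def cayley_den_inv_def ..

lemma tW_zero: "tW n p l X (\<lambda>i j k. 0) = (\<lambda>i j k. 0)"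
  unfolding tW_def by (simp add: tprod_zero_left tprod_zero_right ttrans_def tsub_def)

lemma tTransport_zero:
  assumes "tdims n p l V"
  shows "tTransport n p l X (\<lambda>i j k. 0) V = V"
proof -
  have "tsub (tid n l) (tscale (1/2) (\<lambda>i j k. 0)) = tid n l"
    and "tadd (tid n l) (tscale (1/2) (\<lambda>i j k. 0)) = tid n l"
    by (simp_all add: tsub_def tadd_def tscale_def)
  then show ?thesis
    unfolding tTransport_def tW_zero
    using assms by (simp add: tinv_tid tprod_tid_left[OF tdims_tid] tprod_tid_left[OF assms])
qed

section \<open>Smooth functions of finitely many coordinates\<close>

definition has_partial_on ::
    "'c \<Rightarrow> (('c \<Rightarrow> real) \<Rightarrow> real) \<Rightarrow> (('c \<Rightarrow> real) \<Rightarrow> real) \<Rightarrow> ('c \<Rightarrow> real) set \<Rightarrow> bool" where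
  "has_partial_on c f f' D \<longleftrightarrow> (\<forall>z\<in>D. ((\<lambda>t. f (z(c := z c + t))) has_real_derivative f' z) (at 0))"

lemma coord_smooth_if_closed:
  assumes "f \<in> S"
    and "\<And>f. f \<in> S \<Longrightarrow> coord_cont C D f"
    and "\<And>f c. f \<in> S \<Longrightarrow> c \<in> C \<Longrightarrow> \<exists>f'\<in>S. has_partial_on c f f' D"
  shows "coord_smooth C D f"
  using assms(1)
proof (coinduction arbitrary: f rule: coord_smooth.coinduct)
  case (coord_smooth f)
  have "coord_cont C D f"
    using assms(2)[OF coord_smooth] .
  moreover have "\<forall>c\<in>C. \<exists>g\<in>S. \<forall>z\<in>D. ((\<lambda>t. f (z(c := z c + t))) has_real_derivative g z) (at 0)"
    using assms(3)[OF coord_smooth] unfolding has_partial_on_def by blast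
  ultimately show ?case
    by fast
qed

definition coord_nhds :: "'c set \<Rightarrow> ('c \<Rightarrow> real) set \<Rightarrow> ('c \<Rightarrow> real) \<Rightarrow> ('c \<Rightarrow> real) filter" where
  "coord_nhds C D z = (INF e\<in>{0<..}. principal {w\<in>D. \<forall>c\<in>C. \<bar>w c - z c\<bar> < e})"

lemma eventually_coord_nhds:
  "eventually P (coord_nhds C D z) \<longleftrightarrow> (\<exists>e>0. \<forall>w\<in>D. (\<forall>c\<in>C. \<bar>w c - z c\<bar> < e) \<longrightarrow> P w)"
proof -
  have "eventually P (coord_nhds C D z) \<longleftrightarrow>
        (\<exists>e\<in>{0<..}. eventually P (principal {w\<in>D. \<forall>c\<in>C. \<bar>w c - z c\<bar> < e}))"
    unfolding coord_nhds_def
  proof (rule eventually_INF_base)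
    fix a b :: real assume "a \<in> {0<..}" "b \<in> {0<..}"
    then show "\<exists>e\<in>{0<..}. principal {w\<in>D. \<forall>c\<in>C. \<bar>w c - z c\<bar> < e} \<le>
        inf (principal {w\<in>D. \<forall>c\<in>C. \<bar>w c - z c\<bar> < a}) (principal {w\<in>D. \<forall>c\<in>C. \<bar>w c - z c\<bar> < b})"
      by (intro bexI[of _ "min a b"]) (auto simp: inf_principal)
  qed simp
  then show ?thesis
    by (force simp: eventually_principal)
qed

lemma eventually_coord_nhds_in: "eventually (\<lambda>w. w \<in> D) (coord_nhds C D z)"
  unfolding eventually_coord_nhds by (auto intro: exI[of _ 1])

lemma coord_cont_if_tendsto:
  assumes "\<And>z. z \<in> D \<Longrightarrow> (f \<longlongrightarrow> f z) (coord_nhds C D z)"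
  shows "coord_cont C D f"
  unfolding coord_cont_def
proof (intro ballI allI impI)
  fix z and e :: real assume "z \<in> D" "0 < e"
  then show "\<exists>\<delta>>0. \<forall>w\<in>D. (\<forall>c\<in>C. \<bar>w c - z c\<bar> < \<delta>) \<longrightarrow> \<bar>f w - f z\<bar> < e"
    using assms[of z] unfolding tendsto_iff eventually_coord_nhds dist_real_def by blast
qed

lemma tendsto_coord_nhds_coord:
  assumes "D \<subseteq> coord_space C" "z \<in> D"
  shows "((\<lambda>w. w c) \<longlongrightarrow> z c) (coord_nhds C D z)"
proof (cases "c \<in> C")
  case True
  show ?thesis
    unfolding tendsto_iff eventually_coord_nhds dist_real_def
  proof (intro allI impI)
    fix e :: real assume "0 < e"
    with True show "\<exists>d>0. \<forall>w\<in>D. (\<forall>b\<in>C. \<bar>w b - z b\<bar> < d) \<longrightarrow> \<bar>w c - z c\<bar> < e"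
      by blast
  qed
next
  case False
  have vanish: "w c = 0" if "w \<in> D" for w
    using subsetD[OF assms(1) that] False by (simp add: coord_space_def)
  have "eventually (\<lambda>w. w c = z c) (coord_nhds C D z)"
    unfolding eventually_coord_nhds using assms(2) by (intro exI[of _ 1]) (simp add: vanish)
  then show ?thesis
    by (rule tendsto_eventually)
qed

inductive_set coord_algebra :: "(('c \<Rightarrow> real) \<Rightarrow> real) set \<Rightarrow> (('c \<Rightarrow> real) \<Rightarrow> real) set"
  for G :: "(('c \<Rightarrow> real) \<Rightarrow> real) set" where
  const: "(\<lambda>z. a) \<in> coord_algebra G"
| coord: "(\<lambda>z. z c) \<in> coord_algebra G"
| gen: "g \<in> G \<Longrightarrow> g \<in> coord_algebra G"
| add: "f \<in> coord_algebra G \<Longrightarrow> g \<in> coord_algebra G \<Longrightarrow> (\<lambda>z. f z + g z) \<in> coord_algebra G"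
| mult: "f \<in> coord_algebra G \<Longrightarrow> g \<in> coord_algebra G \<Longrightarrow> (\<lambda>z. f z * g z) \<in> coord_algebra G"

lemma coord_algebra_mono:
  assumes "G \<subseteq> H"
  shows "coord_algebra G \<subseteq> coord_algebra H"
proof
  fix f assume "f \<in> coord_algebra G"
  then show "f \<in> coord_algebra H"
  proof induction
    case (gen g)
    with assms show ?case by (blast intro: coord_algebra.gen)
  qed (simp_all add: coord_algebra.const coord_algebra.coord coord_algebra.add coord_algebra.mult)
qed

lemma coord_algebra_diff:
  assumes "f \<in> coord_algebra G" "g \<in> coord_algebra G"
  shows "(\<lambda>z. f z - g z) \<in> coord_algebra G"
proof -
  have "(\<lambda>z. (-1) * g z) \<in> coord_algebra G"
    using coord_algebra.mult[OF coord_algebra.const assms(2)] .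
  from coord_algebra.add[OF assms(1) this] show ?thesis
    by simp
qed

lemma coord_algebra_sum:
  "(\<And>x. x \<in> A \<Longrightarrow> (\<lambda>z. F x z) \<in> coord_algebra G) \<Longrightarrow> (\<lambda>z. \<Sum>x\<in>A. F x z) \<in> coord_algebra G"
  by (induction A rule: infinite_finite_induct) (simp_all add: coord_algebra.const coord_algebra.add)

lemma tendsto_coord_algebra:
  assumes "f \<in> coord_algebra G"
    and "\<And>c. ((\<lambda>x. w x c) \<longlongrightarrow> z c) F"
    and "\<And>g. g \<in> G \<Longrightarrow> ((\<lambda>x. g (w x)) \<longlongrightarrow> g z) F"
  shows "((\<lambda>x. f (w x)) \<longlongrightarrow> f z) F"
  using assms(1)
proof induction
  case (add f g)
  then show ?case by (intro tendsto_add)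
next
  case (mult f g)
  then show ?case by (intro tendsto_mult)
qed (simp_all add: assms(2,3))

lemma has_partial_on_coord: "has_partial_on c (\<lambda>z. z c') (\<lambda>z. if c' = c then 1 else 0) D"
  unfolding has_partial_on_def
  by (cases "c' = c") (auto intro!: derivative_eq_intros)

lemma has_partial_on_add:
  "has_partial_on c f f' D \<Longrightarrow> has_partial_on c g g' D \<Longrightarrow>
   has_partial_on c (\<lambda>z. f z + g z) (\<lambda>z. f' z + g' z) D"
  unfolding has_partial_on_def by (simp add: DERIV_add)

lemma has_partial_on_mult:
  assumes "has_partial_on c f f' D" "has_partial_on c g g' D"
  shows "has_partial_on c (\<lambda>z. f z * g z) (\<lambda>z. f' z * g z + g' z * f z) D"
  unfolding has_partial_on_def
proof
  fix z assume "z \<in> D"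
  then show "((\<lambda>t. f (z(c := z c + t)) * g (z(c := z c + t))) has_real_derivative f' z * g z + g' z * f z) (at 0)"
    using DERIV_mult[of "\<lambda>t. f (z(c := z c + t))" "f' z" 0 UNIV "\<lambda>t. g (z(c := z c + t))" "g' z"] assms
    by (simp add: has_partial_on_def)
qed

lemma has_partial_on_coord_algebra:
  assumes "f \<in> coord_algebra G"
    and "\<And>g. g \<in> G \<Longrightarrow> \<exists>g'\<in>coord_algebra G. has_partial_on c g g' D"
  shows "\<exists>f'\<in>coord_algebra G. has_partial_on c f f' D"
  using assms(1)
proof induction
  case (const a)
  have "has_partial_on c (\<lambda>z. a) (\<lambda>z. 0) D"
    by (simp add: has_partial_on_def)
  moreover have "(\<lambda>z. 0) \<in> coord_algebra G"
    by (rule coord_algebra.const)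
  ultimately show ?case by (rule bexI)
next
  case (coord c')
  have "has_partial_on c (\<lambda>z. z c') (\<lambda>z. if c' = c then 1 else 0) D"
    by (rule has_partial_on_coord)
  moreover have "(\<lambda>z. if c' = c then 1 else 0) \<in> coord_algebra G"
    by (rule coord_algebra.const)
  ultimately show ?case by (rule bexI)
next
  case (gen g)
  then show ?case by (rule assms(2))
next
  case (add f g)
  obtain f' where f': "f' \<in> coord_algebra G" "has_partial_on c f f' D"
    using add.IH(1) by blast
  obtain g' where g': "g' \<in> coord_algebra G" "has_partial_on c g g' D"
    using add.IH(2) by blast
  have "has_partial_on c (\<lambda>z. f z + g z) (\<lambda>z. f' z + g' z) D"
    by (rule has_partial_on_add[OF f'(2) g'(2)])
  moreover have "(\<lambda>z. f' z + g' z) \<in> coord_algebra G"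
    by (rule coord_algebra.add[OF f'(1) g'(1)])
  ultimately show ?case by (rule bexI)
next
  case (mult f g)
  obtain f' where f': "f' \<in> coord_algebra G" "has_partial_on c f f' D"
    using mult.IH(1) by blast
  obtain g' where g': "g' \<in> coord_algebra G" "has_partial_on c g g' D"
    using mult.IH(2) by blast
  have "has_partial_on c (\<lambda>z. f z * g z) (\<lambda>z. f' z * g z + g' z * f z) D"
    by (rule has_partial_on_mult[OF f'(2) g'(2)])
  moreover have "(\<lambda>z. f' z * g z + g' z * f z) \<in> coord_algebra G"
    using f'(1) g'(1) mult.hyps by (intro coord_algebra.add coord_algebra.mult)
  ultimately show ?case by (rule bexI)
qed

definition tentries_in :: "(('c \<Rightarrow> real) \<Rightarrow> real) set \<Rightarrow> (('c \<Rightarrow> real) \<Rightarrow> tensor) \<Rightarrow> bool" where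
  "tentries_in S T \<longleftrightarrow> (\<forall>i j k. (\<lambda>z. T z i j k) \<in> S)"

lemma tentries_in_tprod:
  assumes "tentries_in (coord_algebra G) F" "tentries_in (coord_algebra G) H"
  shows "tentries_in (coord_algebra G) (\<lambda>z. tprod m l (F z) (H z))"
  unfolding tentries_in_def
proof (intro allI)
  fix i j k
  show "(\<lambda>z. tprod m l (F z) (H z) i j k) \<in> coord_algebra G"
  proof (cases "k < l")
    case True
    have "(\<lambda>z. \<Sum>r<m. \<Sum>s<l. F z i r ((k + l - s) mod l) * H z r j s) \<in> coord_algebra G"
      using assms unfolding tentries_in_def
      by (intro coord_algebra_sum coord_algebra.mult) auto
    with True show ?thesis
      unfolding tprod_def by simp
  qed (simp add: tprod_def coord_algebra.const)
qed

lemma tentries_in_tadd: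
  "tentries_in (coord_algebra G) F \<Longrightarrow> tentries_in (coord_algebra G) H \<Longrightarrow>
   tentries_in (coord_algebra G) (\<lambda>z. tadd (F z) (H z))"
  unfolding tentries_in_def tadd_def by (auto intro: coord_algebra.add)

lemma tentries_in_tsub:
  "tentries_in (coord_algebra G) F \<Longrightarrow> tentries_in (coord_algebra G) H \<Longrightarrow>
   tentries_in (coord_algebra G) (\<lambda>z. tsub (F z) (H z))"
  unfolding tentries_in_def tsub_def by (auto intro: coord_algebra_diff)

lemma tentries_in_tscale:
  "tentries_in (coord_algebra G) F \<Longrightarrow> tentries_in (coord_algebra G) (\<lambda>z. tscale a (F z))"
  unfolding tentries_in_def tscale_def by (auto intro: coord_algebra.mult coord_algebra.const)

lemma tentries_in_const: "tentries_in (coord_algebra G) (\<lambda>z. A)"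
  unfolding tentries_in_def by (auto intro: coord_algebra.const)

lemma tentries_in_ttrans:
  assumes "tentries_in (coord_algebra G) F"
  shows "tentries_in (coord_algebra G) (\<lambda>z. ttrans l (F z))"
  unfolding tentries_in_def
proof (intro allI)
  fix i j k
  show "(\<lambda>z. ttrans l (F z) i j k) \<in> coord_algebra G"
    using assms by (cases "k < l") (simp_all add: tentries_in_def ttrans_def coord_algebra.const)
qed

lemma tentries_in_unpack: "tentries_in (coord_algebra G) (unpack t)"
  unfolding tentries_in_def unpack_def by (auto intro: coord_algebra.coord)

lemma tentries_in_tW:
  "tentries_in (coord_algebra G) F \<Longrightarrow> tentries_in (coord_algebra G) H \<Longrightarrow>
   tentries_in (coord_algebra G) (\<lambda>z. tW n p l (F z) (H z))"
  unfolding tW_def tP_def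
  by (intro tentries_in_tsub tentries_in_tprod tentries_in_tscale tentries_in_ttrans tentries_in_const)

section \<open>Continuity and derivative of the inverse Cayley denominator\<close>

lemma tendsto_tprod:
  assumes "\<And>i j k. ((\<lambda>x. F x i j k) \<longlongrightarrow> F0 i j k) net"
    and "\<And>i j k. ((\<lambda>x. H x i j k) \<longlongrightarrow> H0 i j k) net"
  shows "((\<lambda>x. tprod m l (F x) (H x) i j k) \<longlongrightarrow> tprod m l F0 H0 i j k) net"
  unfolding tprod_def by (cases "k < l") (simp_all, intro tendsto_sum tendsto_mult assms)

lemma tendsto_tinner_self_0:
  assumes "\<And>i j k. ((\<lambda>x. E x i j k) \<longlongrightarrow> 0) net"
  shows "((\<lambda>x. tinner n p l (E x) (E x)) \<longlongrightarrow> 0) net"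
proof -
  have "((\<lambda>x. tinner n p l (E x) (E x)) \<longlongrightarrow> (\<Sum>i<n. \<Sum>j<p. \<Sum>k<l. 0 * 0)) net"
    unfolding tinner_def by (intro tendsto_sum tendsto_mult assms)
  then show ?thesis by simp
qed

lemma tinner_tprod_cayley_den_inv_le:
  assumes W: "tskew n l W" and M: "tdims n q l M"
  shows "tinner n q l (tprod n l (cayley_den_inv n l W) M) (tprod n l (cayley_den_inv n l W) M)
         \<le> tinner n q l M M"
proof -
  let ?A = "tsub (tid n l) (tscale (1/2) W)"
  let ?B = "tprod n l (cayley_den_inv n l W) M"
  have B: "tdims n q l ?B"
    using tdims_tprod[OF cayley_den_inv(1)[OF W] M] .
  have AB: "tprod n l ?A ?B = M"
    using cayley_den_inv(2)[OF W] tprod_tid_left[OF M] by (simp add: tprod_assoc[symmetric])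
  have BM: "tinner n q l ?B M = tinner n q l ?B ?B"
    using tinner_tprod_cayley_factor[OF W B, of "1/2"] AB by simp
  have "0 \<le> tinner n q l (tsub M ?B) (tsub M ?B)"
    by (rule tinner_self_nonneg)
  also have "\<dots> = tinner n q l M M - tinner n q l ?B ?B"
    using BM tinner_commute[of n q l M ?B]
    by (simp add: tinner_tsub_left tinner_tsub_right)
  finally show ?thesis by simp
qed

lemma cayley_den_inv_diff:
  assumes W: "tskew n l W" and W': "tskew n l W'"
  shows "tsub (cayley_den_inv n l W) (cayley_den_inv n l W') =
         tprod n l (tprod n l (cayley_den_inv n l W) (tscale (1/2) (tsub W W'))) (cayley_den_inv n l W')"
proof -
  have "tsub (tsub (tid n l) (tscale (1/2) W')) (tsub (tid n l) (tscale (1/2) W)) = tscale (1/2) (tsub W W')"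
    by (simp add: tsub_def tscale_def fun_eq_iff algebra_simps)
  then show ?thesis
    using tprod_inverse_diff[OF cayley_den_inv(1)[OF W] cayley_den_inv(1)[OF W']
        cayley_den_inv(3)[OF W] cayley_den_inv(2)[OF W']]
    by simp
qed

lemma cayley_den_inv_entry_diff_le:
  assumes W: "tskew n l W" and W': "tskew n l W'" and "a < n" "b < n" "k < l"
  defines "E \<equiv> tprod n l (tscale (1/2) (tsub W W')) (cayley_den_inv n l W')"
  shows "(cayley_den_inv n l W a b k - cayley_den_inv n l W' a b k)\<^sup>2 \<le> tinner n n l E E"
proof -
  let ?G = "cayley_den_inv n l W"
  have "cayley_den_inv n l W a b k - cayley_den_inv n l W' a b k = tprod n l ?G E a b k"
    using arg_cong[OF cayley_den_inv_diff[OF W W'], of "\<lambda>T. T a b k"]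
    by (simp add: E_def tsub_def tprod_assoc)
  then have "(cayley_den_inv n l W a b k - cayley_den_inv n l W' a b k)\<^sup>2 = (tprod n l ?G E a b k)\<^sup>2"
    by simp
  also have "\<dots> \<le> tinner n n l (tprod n l ?G E) (tprod n l ?G E)"
    using assms by (intro entry_square_le_tinner)
  also have "\<dots> \<le> tinner n n l E E"
  proof (rule tinner_tprod_cayley_den_inv_le[OF W])
    have "tdims n n l (tscale (1/2) (tsub W W'))"
      using W W' unfolding tskew_def by (simp add: tdims_tscale tdims_tsub)
    then show "tdims n n l E"
      unfolding E_def using tdims_tprod[OF _ cayley_den_inv(1)[OF W']] by blast
  qed
  finally show ?thesis .
qed

lemma tendsto_cayley_den_inv:
  assumes W0: "tskew n l W0"
    and W: "eventually (\<lambda>x. tskew n l (W x)) F"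
    and lim: "\<And>i j k. ((\<lambda>x. W x i j k) \<longlongrightarrow> W0 i j k) F"
  shows "((\<lambda>x. cayley_den_inv n l (W x) a b k) \<longlongrightarrow> cayley_den_inv n l W0 a b k) F"
proof (cases "a < n \<and> b < n \<and> k < l")
  case False
  then have out: "n \<le> a \<or> n \<le> b \<or> l \<le> k"
    by auto
  have "eventually (\<lambda>x. cayley_den_inv n l (W x) a b k = cayley_den_inv n l W0 a b k) F"
    using W
  proof (rule eventually_mono)
    fix x assume "tskew n l (W x)"
    then show "cayley_den_inv n l (W x) a b k = cayley_den_inv n l W0 a b k"
      using tdimsD[OF cayley_den_inv(1) out] W0 by simp
  qed
  then show ?thesis
    by (rule tendsto_eventually)
next
  case True
  let ?d = "\<lambda>x. cayley_den_inv n l (W x) a b k - cayley_den_inv n l W0 a b k"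
  let ?E = "\<lambda>x. tprod n l (tscale (1/2) (tsub (W x) W0)) (cayley_den_inv n l W0)"
  have "((\<lambda>x. tscale (1/2) (tsub (W x) W0) i j k) \<longlongrightarrow> 0) F" for i j k
    unfolding tscale_def tsub_def by (intro tendsto_mult_right_zero LIM_zero lim)
  then have "((\<lambda>x. ?E x i j k) \<longlongrightarrow> tprod n l (\<lambda>i j k. 0) (cayley_den_inv n l W0) i j k) F" for i j k
    by (intro tendsto_tprod tendsto_const)
  then have E: "((\<lambda>x. ?E x i j k) \<longlongrightarrow> 0) F" for i j k
    by (simp add: tprod_zero_left)
  have "eventually (\<lambda>x. (?d x)\<^sup>2 \<le> tinner n n l (?E x) (?E x)) F"
    using W by (rule eventually_mono) (use True W0 cayley_den_inv_entry_diff_le in blast)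
  then have "((\<lambda>x. (?d x)\<^sup>2) \<longlongrightarrow> 0) F"
    by (intro real_tendsto_sandwich[OF _ _ tendsto_const tendsto_tinner_self_0[OF E]]) auto
  then have "((\<lambda>x. sqrt ((?d x)\<^sup>2)) \<longlongrightarrow> sqrt 0) F"
    by (rule tendsto_real_sqrt)
  then have "(?d \<longlongrightarrow> 0) F"
    by (simp add: tendsto_rabs_zero_iff)
  then show ?thesis
    by (rule LIM_zero_cancel)
qed

lemma has_real_derivative_cayley_den_inv:
  assumes W: "\<And>t. tskew n l (W t)"
    and dW: "\<And>i j k. ((\<lambda>t. W t i j k) has_real_derivative dW i j k) (at 0)"
  shows "((\<lambda>t. cayley_den_inv n l (W t) a b k) has_real_derivative
           tprod n l (tprod n l (cayley_den_inv n l (W 0)) (tscale (1/2) dW)) (cayley_den_inv n l (W 0)) a b k)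
         (at 0)"
proof -
  let ?G = "\<lambda>t. cayley_den_inv n l (W t)"
  let ?Q = "\<lambda>t. tscale (1/2) (tscale (1/t) (tsub (W t) (W 0)))"
  have quotient: "(?G t a b k - ?G 0 a b k) / (t - 0) = tprod n l (tprod n l (?G t) (?Q t)) (?G 0) a b k" for t
  proof -
    have "tscale (1/t) (tsub (?G t) (?G 0)) = tprod n l (tprod n l (?G t) (?Q t)) (?G 0)"
      unfolding cayley_den_inv_diff[OF W W]
      by (simp add: tprod_tscale_left tprod_tscale_right tensor.scale_scale mult.commute)
    from arg_cong[OF this, of "\<lambda>T. T a b k"] show ?thesis
      by (simp add: tscale_def tsub_def)
  qed
  have "((\<lambda>t. W t i j k) \<longlongrightarrow> W 0 i j k) (at 0)" for i j k
    using DERIV_isCont[OF dW] by (simp add: isCont_def)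
  then have G: "((\<lambda>t. ?G t i j k) \<longlongrightarrow> ?G 0 i j k) (at 0)" for i j k
    using W by (intro tendsto_cayley_den_inv) auto
  have Q: "((\<lambda>t. ?Q t i j k) \<longlongrightarrow> tscale (1/2) dW i j k) (at 0)" for i j k
  proof -
    have "((\<lambda>t. 1/2 * ((W t i j k - W 0 i j k) / (t - 0))) \<longlongrightarrow> 1/2 * dW i j k) (at 0)"
      using dW[of i j k] unfolding has_field_derivative_iff by (rule tendsto_mult_left)
    then show ?thesis
      by (simp add: tscale_def tsub_def)
  qed
  show ?thesis
    unfolding has_field_derivative_iff quotient by (intro tendsto_tprod G Q tendsto_const)
qed

section \<open>Smoothness of the transport\<close>

definition tW_coords :: "nat \<Rightarrow> nat \<Rightarrow> nat \<Rightarrow> (nat \<times> nat \<times> nat \<times> nat \<Rightarrow> real) \<Rightarrow> tensor" where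
  "tW_coords n p l z = tW n p l (unpack 0 z) (unpack 1 z)"

definition cayley_gens :: "nat \<Rightarrow> nat \<Rightarrow> nat \<Rightarrow> ((nat \<times> nat \<times> nat \<times> nat \<Rightarrow> real) \<Rightarrow> real) set" where
  "cayley_gens n p l = {(\<lambda>z. cayley_den_inv n l (tW_coords n p l z) a b k) | a b k. True}"

lemma tdims_unpack: "z \<in> coord_space (triple_coords n p l) \<Longrightarrow> tdims n p l (unpack t z)"
  unfolding coord_space_def triple_coords_def tdims_def unpack_def by auto

lemma tskew_tW_coords: "z \<in> coord_space (triple_coords n p l) \<Longrightarrow> tskew n l (tW_coords n p l z)"
  unfolding tW_coords_def by (intro tskew_tW tdims_unpack)

lemma tentries_in_tW_coords: "tentries_in (coord_algebra G) (tW_coords n p l)"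
  unfolding tW_coords_def[abs_def] by (intro tentries_in_tW tentries_in_unpack)

lemma tentries_in_cayley_den_inv:
  "tentries_in (coord_algebra (cayley_gens n p l)) (\<lambda>z. cayley_den_inv n l (tW_coords n p l z))"
  unfolding tentries_in_def cayley_gens_def by (blast intro: coord_algebra.gen)

lemma tentries_polynomial_partial:
  assumes "tentries_in (coord_algebra {}) T"
  obtains T' where "tentries_in (coord_algebra {}) T'"
    and "\<And>i j k. has_partial_on c (\<lambda>z. T z i j k) (\<lambda>z. T' z i j k) D"
proof -
  have "\<forall>x. \<exists>d. d \<in> coord_algebra {} \<and>
          has_partial_on c (\<lambda>z. T z (fst x) (fst (snd x)) (snd (snd x))) d D"
  proof
    fix x
    have "(\<lambda>z. T z (fst x) (fst (snd x)) (snd (snd x))) \<in> coord_algebra {}"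
      using assms unfolding tentries_in_def by blast
    then show "\<exists>d. d \<in> coord_algebra {} \<and>
        has_partial_on c (\<lambda>z. T z (fst x) (fst (snd x)) (snd (snd x))) d D"
      using has_partial_on_coord_algebra[of _ "{}" c D] by blast
  qed
  then obtain d where d_all: "\<forall>x. d x \<in> coord_algebra {} \<and>
      has_partial_on c (\<lambda>z. T z (fst x) (fst (snd x)) (snd (snd x))) (d x) D"
    by (rule choice[THEN exE])
  have d: "d (i, j, k) \<in> coord_algebra {} \<and> has_partial_on c (\<lambda>z. T z i j k) (d (i, j, k)) D" for i j k
    using d_all[rule_format, of "(i, j, k)"] by simp
  show thesis
  proof (rule that)
    show "tentries_in (coord_algebra {}) (\<lambda>z i j k. d (i, j, k) z)"
      unfolding tentries_in_def using d by simp
    show "has_partial_on c (\<lambda>z. T z i j k) (\<lambda>z. d (i, j, k) z) D" for i j k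
      using d by simp
  qed
qed

lemma has_partial_on_cayley_gens:
  assumes g: "g \<in> cayley_gens n p l" and c: "c \<in> triple_coords n p l"
  shows "\<exists>g'\<in>coord_algebra (cayley_gens n p l). has_partial_on c g g' (coord_space (triple_coords n p l))"
proof -
  let ?D = "coord_space (triple_coords n p l)" and ?S = "coord_algebra (cayley_gens n p l)"
  let ?G = "\<lambda>z. cayley_den_inv n l (tW_coords n p l z)"
  obtain a b k where g_eq: "g = (\<lambda>z. ?G z a b k)"
    using g unfolding cayley_gens_def by blast
  obtain dW where dW: "tentries_in (coord_algebra {}) dW"
    and partial_W: "\<And>i j k. has_partial_on c (\<lambda>z. tW_coords n p l z i j k) (\<lambda>z. dW z i j k) UNIV"
    using tentries_polynomial_partial[where c=c and D=UNIV, OF tentries_in_tW_coords[of "{}" n p l]] by blast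
  let ?g' = "\<lambda>z. tprod n l (tprod n l (?G z) (tscale (1/2) (dW z))) (?G z) a b k"
  have "tentries_in ?S dW"
    using dW coord_algebra_mono[of "{}" "cayley_gens n p l"] unfolding tentries_in_def by blast
  then have "tentries_in ?S (\<lambda>z. tprod n l (tprod n l (?G z) (tscale (1/2) (dW z))) (?G z))"
    using tentries_in_cayley_den_inv by (intro tentries_in_tprod tentries_in_tscale)
  then have "?g' \<in> ?S"
    unfolding tentries_in_def by blast
  moreover have "has_partial_on c g ?g' ?D"
    unfolding has_partial_on_def g_eq
  proof
    fix z assume z: "z \<in> ?D"
    have "tskew n l (tW_coords n p l (z(c := z c + t)))" for t
      using z c by (intro tskew_tW_coords) (auto simp: coord_space_def)
    moreover have "((\<lambda>t. tW_coords n p l (z(c := z c + t)) i j k) has_real_derivative dW z i j k) (at 0)"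
      for i j k
      using partial_W[of i j k] unfolding has_partial_on_def by simp
    ultimately show "((\<lambda>t. ?G (z(c := z c + t)) a b k) has_real_derivative ?g' z) (at 0)"
      using has_real_derivative_cayley_den_inv[where W="\<lambda>t. tW_coords n p l (z(c := z c + t))"] by simp
  qed
  ultimately show ?thesis by blast
qed

lemma tendsto_cayley_gens:
  assumes g: "g \<in> cayley_gens n p l" and z: "z \<in> coord_space (triple_coords n p l)"
  shows "(g \<longlongrightarrow> g z) (coord_nhds (triple_coords n p l) (coord_space (triple_coords n p l)) z)"
proof -
  let ?F = "coord_nhds (triple_coords n p l) (coord_space (triple_coords n p l)) z"
  obtain a b k where g_eq: "g = (\<lambda>z. cayley_den_inv n l (tW_coords n p l z) a b k)"
    using g unfolding cayley_gens_def by blast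
  have ev: "eventually (\<lambda>w. tskew n l (tW_coords n p l w)) ?F"
    using eventually_coord_nhds_in by (rule eventually_mono) (rule tskew_tW_coords)
  have lim: "((\<lambda>w. tW_coords n p l w i j k) \<longlongrightarrow> tW_coords n p l z i j k) ?F" for i j k
  proof -
    have "(\<lambda>w. tW_coords n p l w i j k) \<in> coord_algebra {}"
      using tentries_in_tW_coords unfolding tentries_in_def by blast
    from tendsto_coord_algebra[OF this tendsto_coord_nhds_coord[OF subset_refl z]] show ?thesis
      by simp
  qed
  show ?thesis
    unfolding g_eq by (rule tendsto_cayley_den_inv[OF tskew_tW_coords[OF z] ev lim])
qed

lemma coord_smooth_cayley_algebra:
  assumes "f \<in> coord_algebra (cayley_gens n p l)"
  shows "coord_smooth (triple_coords n p l) (coord_space (triple_coords n p l)) f"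
proof (rule coord_smooth_if_closed[OF assms])
  fix f assume f: "f \<in> coord_algebra (cayley_gens n p l)"
  show "coord_cont (triple_coords n p l) (coord_space (triple_coords n p l)) f"
  proof (rule coord_cont_if_tendsto)
    fix z assume "z \<in> coord_space (triple_coords n p l)"
    then show "(f \<longlongrightarrow> f z) (coord_nhds (triple_coords n p l) (coord_space (triple_coords n p l)) z)"
      using tendsto_coord_algebra[OF f tendsto_coord_nhds_coord[OF subset_refl] tendsto_cayley_gens]
      by simp
  qed
next
  fix f c assume f: "f \<in> coord_algebra (cayley_gens n p l)" and c: "c \<in> triple_coords n p l"
  show "\<exists>f'\<in>coord_algebra (cayley_gens n p l). has_partial_on c f f' (coord_space (triple_coords n p l))"
    by (rule has_partial_on_coord_algebra[OF f has_partial_on_cayley_gens[OF _ c]])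
qed

lemma tentries_in_tTransport_coords:
  "tentries_in (coord_algebra (cayley_gens n p l))
     (\<lambda>z. tTransport n p l (unpack 0 z) (unpack 1 z) (unpack 2 z))"
  unfolding tTransport_eq_tcayley tcayley_def tW_coords_def[symmetric]
  by (intro tentries_in_tprod tentries_in_cayley_den_inv tentries_in_tadd tentries_in_const
      tentries_in_tscale tentries_in_tW_coords tentries_in_unpack)

lemma pack3_in_coord_space:
  assumes "tdims n p l X" "tdims n p l U" "tdims n p l V"
  shows "pack3 X U V \<in> coord_space (triple_coords n p l)"
  using assms unfolding coord_space_def triple_coords_def pack3_def tdims_def by auto

lemma coord_open_coord_space: "coord_open C (coord_space C)"
  unfolding coord_open_def by (auto intro: exI[of _ "1::real"])

(* D is the whole coordinate space: W is skew for every pair of tensors, so I - W/2 is invertible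
   at every point. *)
lemma tTransport_coord_smooth:
  "\<exists>D. coord_open (triple_coords n p l) D \<and>
     (\<forall>X\<in>tStiefel n p l. \<forall>U\<in>tTangent n p l X. \<forall>V\<in>tTangent n p l X. pack3 X U V \<in> D) \<and>
     (\<forall>i<n. \<forall>j<p. \<forall>k<l. coord_smooth (triple_coords n p l) D
         (\<lambda>z. tTransport n p l (unpack 0 z) (unpack 1 z) (unpack 2 z) i j k))"
proof (intro exI conjI ballI allI impI)
  show "coord_open (triple_coords n p l) (coord_space (triple_coords n p l))"
    by (rule coord_open_coord_space)
  show "pack3 X U V \<in> coord_space (triple_coords n p l)"
    if "X \<in> tStiefel n p l" "U \<in> tTangent n p l X" "V \<in> tTangent n p l X" for X U V
    using that by (intro pack3_in_coord_space) (simp_all add: tStiefel_def tTangent_def)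
  show "coord_smooth (triple_coords n p l) (coord_space (triple_coords n p l))
          (\<lambda>z. tTransport n p l (unpack 0 z) (unpack 1 z) (unpack 2 z) i j k)" for i j k
    using tentries_in_tTransport_coords unfolding tentries_in_def
    by (intro coord_smooth_cayley_algebra) blast
qed

theorem mainTheorem14:
  fixes n p l :: nat
  assumes "p \<le> n"
  shows
    \<comment> \<open>well-definedness: I - W_U/2 is t-invertible\<close>
    "(\<forall>X\<in>tStiefel n p l. \<forall>U\<in>tTangent n p l X.
        tinvertible n l (tsub (tid n l) (tscale (1/2) (tW n p l X U))))
   \<and> \<comment> \<open>smoothness on the Whitney sum TSt + TSt (via the ambient formula on an open set)\<close>
     (\<exists>D. coord_open (triple_coords n p l) D \<and>
        (\<forall>X\<in>tStiefel n p l. \<forall>U\<in>tTangent n p l X. \<forall>V\<in>tTangent n p l X. pack3 X U V \<in> D) \<and>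
        (\<forall>i<n. \<forall>j<p. \<forall>k<l. coord_smooth (triple_coords n p l) D
            (\<lambda>z. tTransport n p l (unpack 0 z) (unpack 1 z) (unpack 2 z) i j k)))
   \<and> \<comment> \<open>tangency: T_U V lies in the tangent space at R_X(U)\<close>
     (\<forall>X\<in>tStiefel n p l. \<forall>U\<in>tTangent n p l X. \<forall>V\<in>tTangent n p l X.
        tTransport n p l X U V \<in> tTangent n p l (tCayley n p l X U))
   \<and> \<comment> \<open>consistency: T_0 V = V\<close>
     (\<forall>X\<in>tStiefel n p l. \<forall>V\<in>tTangent n p l X.
        tTransport n p l X (\<lambda>i j k. 0) V = V)
   \<and> \<comment> \<open>linearity in V\<close>
     (\<forall>X\<in>tStiefel n p l. \<forall>U\<in>tTangent n p l X. \<forall>V1\<in>tTangent n p l X. \<forall>V2\<in>tTangent n p l X.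
        \<forall>a b :: real. tTransport n p l X U (tadd (tscale a V1) (tscale b V2)) =
           tadd (tscale a (tTransport n p l X U V1)) (tscale b (tTransport n p l X U V2)))
   \<and> \<comment> \<open>isometry\<close>
     (\<forall>X\<in>tStiefel n p l. \<forall>U\<in>tTangent n p l X. \<forall>V\<in>tTangent n p l X.
        tinner n p l (tTransport n p l X U V) (tTransport n p l X U V) = tinner n p l V V)"
proof -
  have skew: "tskew n l (tW n p l X U)" if "X \<in> tStiefel n p l" "U \<in> tTangent n p l X" for X U
    using that by (intro tskew_tW) (simp_all add: tStiefel_def tTangent_def)
  have dims: "tdims n p l V" if "V \<in> tTangent n p l X" for X V
    using that by (simp add: tTangent_def)
  show ?thesis
    using tinvertible_cayley_factor[OF skew] tTransport_coord_smooth tTransport_zero[OF dims]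
      tTangent_tprod_torth[OF torth_tcayley[OF skew]] tinner_tprod_torth[OF torth_tcayley[OF skew] dims]
    by (auto simp: tTransport_eq_tcayley tCayley_eq_tcayley tprod_tadd_right tprod_tscale_right)
qed

end
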